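(* The family $(f_t)_{t}$, where $t$ runs over all (nonempty) planar rooted trees, is a basis of $\mathrm{Prim}(\mathcal{H})=\{x\in\mathcal{H}:\Delta(x)=x\otimes1+1\otimes x\}$.
   Context: Let $K$ be a field. Planar rooted trees have their children linearly ordered left to right; a planar forest is a finite, possibly empty, sequence $t_1\cdots t_n$ of planar rooted trees ($1$ = empty forest). $\mathcal{H}$ is the free associative unital $K$-algebra on planar rooted trees, with basis the planar forests and product concatenation, graded by weight (number of vertices). $B^+(F)$ is the tree obtained by grafting the trees of $F$ (in order) on a new common root. $\varepsilon(F)=\delta_{F,1}$. $\Delta$ is the unique linear map with $\Delta(1)=1\otimes1$, $\Delta(xy)=(x\otimes1)\Delta(y)+\Delta(x)(1\otimes y)-x\otimes y$, $\Delta(B^+(x))=B^+(x)\otimes 1+(\mathrm{Id}\otimes B^+)\Delta(x)$. $\gamma:\mathcal{H}\to\mathcal{H}$ is linear with $\gamma(t_1\cdots t_n)=\delta_{t_1,\bullet}t_2\cdots t_n$ ($\bullet$ the one-vertex tree) and $\gamma(1)=0$. $\langle-,-\rangle$ is the unique bilinear form on $\mathcal{H}$ with $\langle1,x\rangle=\varepsilon(x)$, $\langle xy,z\rangle=\langle y\otimes x,\Delta(z)\rangle$ (with $\langle a\otimes b,c\otimes d\rangle=\langle a,c\rangle\langle b,d\rangle$) and $\langle B^+(x),y\rangle=\langle x,\gamma(y)\rangle$; it is symmetric, non-degenerate, and forests of different weights are orthogonal. $(f_F)_F$ is the dual basis of the basis of forests: $\langle f_F,G\rangle=\delta_{F,G}$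 for all planar forests $G$. *)

theory Defs
  imports Main
begin

text \<open>A planar rooted tree is a root together with the ordered list of its subtrees;
  Node F is B+(F). A planar forest is a list of planar trees; [] is the empty forest 1.\<close>
datatype ptree = Node "ptree list"

type_synonym forest = "ptree list"

text \<open>Elements of H (free vector space on planar forests) are finitely supported
  coefficient functions forest => K; elements of H (x) H are finitely supported
  functions on pairs of forests (the tensor product of free modules is free on the
  product of the bases). The product of H is concatenation of forests.\<close>

definition supp :: "('a \<Rightarrow> 'k::zero) \<Rightarrow> 'a set" where
  "supp x = {a. x a \<noteq> 0}"

definition inH :: "(forest \<Rightarrow> 'k::zero) \<Rightarrow> bool" where
  "inH x \<longleftrightarrow> finite (supp x)"

definition basisv :: "'a \<Rightarrow> 'a \<Rightarrow> 'k::{zero,one}" where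
  "basisv a = (\<lambda>b. if b = a then 1 else 0)"

abbreviation dot :: ptree where "dot \<equiv> Node []"

text \<open>delta F is Delta(F) for a forest F, as an element of H (x) H:
  Delta(1) = 1 (x) 1;
  Delta(B+(F)) = B+(F) (x) 1 + (Id (x) B+) Delta(F);
  Delta(t G) = (t (x) 1) Delta(G) + Delta(t) (1 (x) G) - t (x) G  (G nonempty),
  which is the rule Delta(xy) with x = t, y = G.\<close>
function delta :: "forest \<Rightarrow> forest \<times> forest \<Rightarrow> 'k::field" where
  "delta [] = basisv ([], [])"
| "delta [Node F] =
     (\<lambda>(a, b). basisv ([Node F], []) (a, b)
        + (case b of [Node c] \<Rightarrow> delta F (a, c) | _ \<Rightarrow> 0))"
| "delta (t # s # F) =
     (\<lambda>(a, b). (case a of [] \<Rightarrow> 0 | u # a' \<Rightarrow> if u = t then delta (s # F) (a', b) else 0)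
        + (if drop (length b - length (s # F)) b = s # F \<and> length (s # F) \<le> length b
           then delta [t] (a, take (length b - length (s # F)) b) else 0)
        - basisv ([t], s # F) (a, b))"
  by pat_completeness auto
termination
  by (relation "measure (size_list size)") auto

definition Delta :: "(forest \<Rightarrow> 'k::field) \<Rightarrow> forest \<times> forest \<Rightarrow> 'k" where
  "Delta x = (\<lambda>p. \<Sum>F\<in>supp x. x F * delta F p)"

definition Prim :: "(forest \<Rightarrow> 'k::field) set" where
  "Prim = {x. inH x \<and>
     Delta x = (\<lambda>(a, b). (if b = [] then x a else 0) + (if a = [] then x b else 0))}"

text \<open>pair F G = <F, G> on basis forests:
  <1, G> = epsilon(G);  <B+(F), G> = <F, gamma(G)>, where
  gamma(t1...tn) = delta_{t1,dot} t2...tn, gamma(1) = 0;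
  <x y, z> = <y (x) x, Delta(z)> with x = t the first tree, y the remaining nonempty forest.\<close>
function pair :: "forest \<Rightarrow> forest \<Rightarrow> 'k::field" where
  "pair [] G = (if G = [] then 1 else 0)"
| "pair [Node F] G = (case G of u # G' \<Rightarrow> if u = dot then pair F G' else 0 | [] \<Rightarrow> 0)"
| "pair (t # s # F) G =
     (\<Sum>p\<in>supp (delta G :: _ \<Rightarrow> 'k). delta G p * pair (s # F) (fst p) * pair [t] (snd p))"
  by pat_completeness auto
termination
  by (relation "measure (\<lambda>(F, G). size_list size F)") auto

definition pairing :: "(forest \<Rightarrow> 'k::field) \<Rightarrow> forest \<Rightarrow> 'k" where
  "pairing x G = (\<Sum>F\<in>supp x. x F * pair F G)"

text \<open>The dual basis: f_F is the (unique, by non-degeneracy) element of H with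
  <f_F, G> = delta_{F,G} for all planar forests G.\<close>
definition fdual :: "forest \<Rightarrow> forest \<Rightarrow> 'k::field" where
  "fdual F = (THE x. inH x \<and> (\<forall>G. pairing x G = (if F = G then 1 else 0)))"

definition lincomb :: "('i \<Rightarrow> 'k::field) \<Rightarrow> ('i \<Rightarrow> 'a \<Rightarrow> 'k) \<Rightarrow> 'i set \<Rightarrow> 'a \<Rightarrow> 'k" where
  "lincomb c v T = (\<lambda>a. \<Sum>i\<in>T. c i * v i a)"

definition is_basis_of :: "('i \<Rightarrow> 'a \<Rightarrow> 'k::field) \<Rightarrow> 'i set \<Rightarrow> ('a \<Rightarrow> 'k) set \<Rightarrow> bool" where
  "is_basis_of v I S \<longleftrightarrow>
     (\<forall>i\<in>I. v i \<in> S) \<and>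
     (\<forall>T c. finite T \<longrightarrow> T \<subseteq> I \<longrightarrow> lincomb c v T = (\<lambda>_. 0) \<longrightarrow> (\<forall>i\<in>T. c i = 0)) \<and>
     (\<forall>x\<in>S. \<exists>T c. finite T \<and> T \<subseteq> I \<and> x = lincomb c v T)"

end

theory Submission
  imports Defs
begin

text \<open>The planar coproduct of a forest G is the sum of its weight G + 1 cuts, obtained by
  splitting the vertices of G, listed in postorder, into an initial and a final segment.
  Consequently the pairing is homogeneous, multiplicative in the sense that
  <F1 F2, G> = <F2, G'> <F1, G''> for the unique cut (G', G'') of G of weight w(F2),
  and symmetric. Paired against the forests twisted by an involution, its matrix on the
  forests of a fixed weight is unitriangular for a suitable total order, so the pairing is
  non-degenerate and the dual basis (f_F) exists.

  Since <BA, x> = <A \<otimes> B, \<Delta>(x)> and the pairing is non-degenerate on H \<otimes> H, an element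
  x is primitive iff <BA, x> = <A, x> \<epsilon>(B) + \<epsilon>(A) <B, x> for all forests A and B. A tree
  is not the product of two nonempty forests, so every f_t satisfies this identity.
  Conversely a primitive x is orthogonal to 1 and to every product of two nonempty forests,
  that is to every forest which is not a tree, hence x is the sum of the <x, t> f_t over all trees t.\<close>

section \<open>Weight and cuts of forests\<close>

fun weight :: "forest \<Rightarrow> nat" where
  "weight [] = 0"
| "weight (Node F # R) = Suc (weight F + weight R)"

text \<open>cut i G splits off the first i vertices of G in postorder (children before
  their root, trees from left to right).\<close>
fun cut :: "nat \<Rightarrow> forest \<Rightarrow> forest \<times> forest" where
  "cut i [] = ([], [])"
| "cut i (Node F # R) =
     (if i \<le> weight F then (fst (cut i F), Node (snd (cut i F)) # R)
      else (Node F # fst (cut (i - Suc (weight F)) R), snd (cut (i - Suc (weight F)) R)))"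

lemma weight_append [simp]: "weight (A @ B) = weight A + weight B"
  by (induction A rule: weight.induct) auto

lemma weight_eq_0_iff [simp]: "weight F = 0 \<longleftrightarrow> F = []"
  by (cases F rule: weight.cases) auto

lemma weight_Cons: "weight (t # R) = weight [t] + weight R"
  using weight_append[of "[t]" R] by simp

lemma weight_tree_pos: "1 \<le> weight [t]"
  by (cases t) auto

lemma weight_less_Cons:
  assumes "R \<noteq> []"
  shows "weight R < weight (t # R)" "weight [t] < weight (t # R)"
proof -
  have "weight R \<noteq> 0" using assms by simp
  then show "weight R < weight (t # R)" "weight [t] < weight (t # R)"
    using weight_Cons[of t R] weight_tree_pos[of t] by linarith+
qed

lemma finite_weight_le: "finite {F. weight F \<le> n}"
proof (induction n)
  case (Suc n)
  let ?small = "{F. weight F \<le> n}"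
  have "{F. weight F \<le> Suc n} \<subseteq> insert [] ((\<lambda>(X, R). Node X # R) ` (?small \<times> ?small))"
  proof
    fix F assume "F \<in> {F. weight F \<le> Suc n}"
    then show "F \<in> insert [] ((\<lambda>(X, R). Node X # R) ` (?small \<times> ?small))"
      by (cases F rule: weight.cases) force+
  qed
  then show ?case by (rule finite_subset) (use Suc in simp)
qed simp

lemma finite_weight_eq: "finite {F. weight F = n}"
  by (rule finite_subset[OF _ finite_weight_le[of n]]) auto

lemma cut_0 [simp]: "cut 0 G = ([], G)"
  by (induction G rule: weight.induct) auto

lemma cut_beyond: "weight G \<le> i \<Longrightarrow> cut i G = (G, [])"
  by (induction i G rule: cut.induct) auto

lemma cut_weight: "cut (weight G) G = (G, [])"
  by (simp add: cut_beyond)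

lemma weight_cut: "i \<le> weight G \<Longrightarrow> weight (fst (cut i G)) = i \<and> weight (snd (cut i G)) = weight G - i"
  by (induction i G rule: cut.induct) auto

lemma cut_append_le:
  "i \<le> weight G1 \<Longrightarrow> cut i (G1 @ G2) = (fst (cut i G1), snd (cut i G1) @ G2)"
  by (induction i G1 rule: cut.induct) auto

lemma cut_append_ge:
  "weight G1 \<le> i \<Longrightarrow> cut i (G1 @ G2) = (G1 @ fst (cut (i - weight G1) G2), snd (cut (i - weight G1) G2))"
  by (induction i G1 rule: cut.induct) (auto simp: cut_beyond diff_diff_add)

lemma cut_cut:
  assumes "i \<le> j" "j \<le> weight G"
  shows "cut i (fst (cut j G)) = (fst (cut i G), fst (cut (j - i) (snd (cut i G))))
    \<and> snd (cut (j - i) (snd (cut i G))) = snd (cut j G)"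
  using assms
proof (induction G arbitrary: i j rule: weight.induct)
  case (2 F R)
  show ?case
  proof (cases "j \<le> weight F")
    case True
    then show ?thesis using 2 weight_cut[of i F] by auto
  next
    case jF: False
    show ?thesis
    proof (cases "i \<le> weight F")
      case True
      have "j - i - Suc (weight F - i) = j - Suc (weight F)" using True jF by simp
      then show ?thesis using True jF weight_cut[of i F] by auto
    next
      case False
      have e: "j - Suc (weight F) - (i - Suc (weight F)) = j - i" using False jF by simp
      have "i - Suc (weight F) \<le> j - Suc (weight F)" "j - Suc (weight F) \<le> weight R"
        using 2(3,4) False jF by auto
      from "2.IH"(2)[OF this] show ?thesis using False jF e by (auto simp: weight_cut)
    qed
  qed
qed simp

definition cuts :: "forest \<Rightarrow> (forest \<times> forest) set" where
  "cuts G = (\<lambda>i. cut i G) ` {..weight G}"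

lemma finite_cuts [simp]: "finite (cuts G)"
  unfolding cuts_def by simp

lemma weight_cuts: "p \<in> cuts G \<Longrightarrow> weight (fst p) + weight (snd p) = weight G"
  unfolding cuts_def using weight_cut by fastforce

lemma inj_on_cut: "inj_on (\<lambda>i. cut i G) {..weight G}"
  by (rule inj_onI) (metis atMost_iff weight_cut)

lemma sum_cuts: "(\<Sum>p\<in>cuts G. g p) = (\<Sum>i\<le>weight G. g (cut i G))"
  unfolding cuts_def by (simp add: sum.reindex[OF inj_on_cut])

lemma trivial_cuts: "([], G) \<in> cuts G" "(G, []) \<in> cuts G"
  unfolding cuts_def using cut_weight[of G] by (auto intro: image_eqI[where x=0] image_eqI[where x="weight G"])

lemma cuts_left_Nil: "([], b) \<in> cuts G \<Longrightarrow> b = G"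
proof -
  assume "([], b) \<in> cuts G"
  then obtain i where i: "i \<le> weight G" "cut i G = ([], b)" by (auto simp: cuts_def)
  then have "i = 0" using weight_cut[of i G] by simp
  then show ?thesis using i by simp
qed

lemma cuts_right_Nil: "(a, []) \<in> cuts G \<Longrightarrow> a = G"
proof -
  assume "(a, []) \<in> cuts G"
  then obtain i where i: "i \<le> weight G" "cut i G = (a, [])" by (auto simp: cuts_def)
  then have "i = weight G" using weight_cut[of i G] by simp
  then show ?thesis using i cut_weight[of G] by simp
qed

lemma cuts_Nil: "cuts [] = {([], [])}"
  by (simp add: cuts_def)

lemma cuts_Node: "cuts [Node F] = insert ([Node F], []) ((\<lambda>(a, c). (a, [Node c])) ` cuts F)"
proof -
  have "cuts [Node F] = insert (cut (Suc (weight F)) [Node F]) ((\<lambda>i. cut i [Node F]) ` {..weight F})"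
    unfolding cuts_def by (simp add: atMost_Suc del: cut.simps)
  moreover have "(\<lambda>i. cut i [Node F]) ` {..weight F} = (\<lambda>(a, c). (a, [Node c])) ` cuts F"
    unfolding cuts_def image_image by (rule image_cong) (auto simp: split_beta)
  ultimately show ?thesis by simp
qed

lemma cuts_Cons:
  "cuts (t # R) = ((\<lambda>(a, b). (t # a, b)) ` cuts R) \<union> ((\<lambda>(a, b). (a, b @ R)) ` cuts [t])"
proof -
  have "{..weight (t # R)} = {..weight [t]} \<union> (\<lambda>j. weight [t] + j) ` {..weight R}"
  proof (intro equalityI subsetI)
    fix i assume i: "i \<in> {..weight (t # R)}"
    show "i \<in> {..weight [t]} \<union> (\<lambda>j. weight [t] + j) ` {..weight R}"
    proof (cases "i \<le> weight [t]")
      case False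
      then have "i = weight [t] + (i - weight [t])" "i - weight [t] \<le> weight R"
        using i by (auto simp: weight_Cons[of t R])
      then show ?thesis by blast
    qed simp
  qed (auto simp: weight_Cons[of t R])
  moreover have "(\<lambda>i. cut i (t # R)) ` {..weight [t]} = (\<lambda>(a, b). (a, b @ R)) ` cuts [t]"
    unfolding cuts_def image_image using cut_append_le[of _ "[t]" R]
    by (intro image_cong) (auto simp: split_beta)
  moreover have "(\<lambda>i. cut i (t # R)) ` (\<lambda>j. weight [t] + j) ` {..weight R}
      = (\<lambda>(a, b). (t # a, b)) ` cuts R"
    unfolding cuts_def image_image using cut_append_ge[of "[t]" _ R]
    by (intro image_cong) (auto simp: split_beta)
  ultimately show ?thesis unfolding cuts_def by (simp only: image_Un Un_commute)
qed

lemma cuts_Cons_overlap: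
  "((\<lambda>(a, b). (t # a, b)) ` cuts R) \<inter> ((\<lambda>(a, b). (a, b @ R)) ` cuts [t]) = {([t], R)}"
proof (intro equalityI subsetI)
  fix p assume p: "p \<in> ((\<lambda>(a, b). (t # a, b)) ` cuts R) \<inter> ((\<lambda>(a, b). (a, b @ R)) ` cuts [t])"
  then obtain a b where ab: "(a, b) \<in> cuts R" "p = (t # a, b)" by auto
  from p obtain a' b' where ab': "(a', b') \<in> cuts [t]" "p = (a', b' @ R)" by auto
  have "b = b' @ R" using ab ab' by simp
  then have "weight a + weight b' = 0" using weight_cuts[OF ab(1)] by simp
  then have "a = []" "b' = []" by simp_all
  then have "b = R" "a' = [t]" using ab ab' cuts_left_Nil cuts_right_Nil by auto
  then show "p \<in> {([t], R)}" using ab \<open>a = []\<close> by simp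
next
  fix p assume "p \<in> {([t], R)}"
  then show "p \<in> ((\<lambda>(a, b). (t # a, b)) ` cuts R) \<inter> ((\<lambda>(a, b). (a, b @ R)) ` cuts [t])"
    using trivial_cuts[of R] trivial_cuts[of "[t]"] by force
qed

lemma mem_image_append_right:
  "(a, b) \<in> (\<lambda>(a, c). (a, c @ R)) ` S \<longleftrightarrow>
     drop (length b - length R) b = R \<and> length R \<le> length b \<and> (a, take (length b - length R) b) \<in> S"
proof
  assume "(a, b) \<in> (\<lambda>(a, c). (a, c @ R)) ` S"
  then obtain c where "(a, c) \<in> S" "b = c @ R" by auto
  then show "drop (length b - length R) b = R \<and> length R \<le> length b \<and> (a, take (length b - length R) b) \<in> S"
    by simp
next
  assume h: "drop (length b - length R) b = R \<and> length R \<le> length b \<and> (a, take (length b - length R) b) \<in> S"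
  then have "b = take (length b - length R) b @ R" by (metis append_take_drop_id)
  with h show "(a, b) \<in> (\<lambda>(a, c). (a, c @ R)) ` S" by (auto intro: rev_image_eqI)
qed

lemma delta_cuts: "delta G p = (if p \<in> cuts G then 1 else (0::'k::field))"
proof (induction G arbitrary: p rule: delta.induct)
  case 1
  then show ?case by (auto simp: basisv_def cuts_Nil)
next
  case (2 F)
  obtain a b where p: "p = (a, b)" by fastforce
  have "(case b of [Node c] \<Rightarrow> delta F (a, c) | _ \<Rightarrow> 0)
     = (if (a, b) \<in> (\<lambda>(a, c). (a, [Node c])) ` cuts F then 1 else (0::'k))"
    using "2.IH" by (auto split: list.split ptree.split)
  moreover have "([Node F], []) \<notin> (\<lambda>(a, c). (a, [Node c])) ` cuts F" by auto
  ultimately show ?case using p by (auto simp: basisv_def cuts_Node)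
next
  case (3 t s F)
  obtain a b where p: "p = (a, b)" by fastforce
  let ?A = "(\<lambda>(a, b). (t # a, b)) ` cuts (s # F)"
  let ?B = "(\<lambda>(a, b). (a, b @ s # F)) ` cuts [t]"
  have "(case a of [] \<Rightarrow> 0 | u # a' \<Rightarrow> if u = t then delta (s # F) (a', b) else 0)
      = (if (a, b) \<in> ?A then 1 else (0::'k))"
    using "3.IH"(1) by (cases a) auto
  moreover have "(if drop (length b - length (s # F)) b = s # F \<and> length (s # F) \<le> length b
           then delta [t] (a, take (length b - length (s # F)) b) else 0)
      = (if (a, b) \<in> ?B then 1 else (0::'k))"
    using "3.IH"(2) by (simp only: mem_image_append_right) auto
  ultimately have "delta (t # s # F) (a, b) = (if (a, b) \<in> ?A then 1 else 0)
      + (if (a, b) \<in> ?B then 1 else 0) - (if (a, b) = ([t], s # F) then 1 else (0::'k))"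
    by (simp add: basisv_def)
  also have "\<dots> = (if (a, b) \<in> ?A \<union> ?B then 1 else 0)"
  proof -
    have "((a, b) = ([t], s # F)) = ((a, b) \<in> ?A \<and> (a, b) \<in> ?B)"
      using cuts_Cons_overlap[of t "s # F"] by blast
    then show ?thesis by simp
  qed
  finally show ?case using p cuts_Cons[of t "s # F"] by simp
qed

lemma supp_delta: "supp (delta G :: _ \<Rightarrow> 'k::field) = cuts G"
  by (auto simp: supp_def delta_cuts)

section \<open>The pairing on forests\<close>

lemma sum_eq_single:
  assumes "finite A" "k \<in> A" "\<And>i. i \<in> A \<Longrightarrow> i \<noteq> k \<Longrightarrow> g i = 0"
  shows "sum g A = g k"
proof -
  have "sum g A = g k + sum g (A - {k})" using assms(1,2) by (rule sum.remove)
  also have "sum g (A - {k}) = 0" using assms(3) by (intro sum.neutral) blast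
  finally show ?thesis by simp
qed

lemma pair_Cons_sum_cut:
  "pair (t # R) G = (\<Sum>i\<le>weight G. pair R (fst (cut i G)) * pair [t] (snd (cut i G)) :: 'k::field)"
proof (cases R)
  case Nil
  have "(\<Sum>i\<le>weight G. pair [] (fst (cut i G)) * pair [t] (snd (cut i G)) :: 'k)
      = pair [] (fst (cut 0 G)) * pair [t] (snd (cut 0 G))"
  proof (rule sum_eq_single)
    fix i assume "i \<in> {..weight G}" "i \<noteq> 0"
    then have "fst (cut i G) \<noteq> []" using weight_cut[of i G] by auto
    then show "pair [] (fst (cut i G)) * pair [t] (snd (cut i G)) = (0::'k)" by simp
  qed simp_all
  then show ?thesis using Nil by simp
next
  case (Cons s F)
  have "pair (t # s # F) G = (\<Sum>p\<in>cuts G. pair (s # F) (fst p) * pair [t] (snd p) :: 'k)"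
    by (simp add: supp_delta delta_cuts)
  then show ?thesis using Cons by (simp add: sum_cuts)
qed

lemma weight_eq_if_pair_nonzero: "pair F G \<noteq> (0::'k::field) \<Longrightarrow> weight F = weight G"
proof (induction "weight F" arbitrary: F G rule: less_induct)
  case less
  show ?case
  proof (cases F)
    case Nil
    then show ?thesis using less.prems by (auto split: if_splits)
  next
    case (Cons t R)
    show ?thesis
    proof (cases "R = []")
      case True
      obtain X where t: "t = Node X" by (cases t)
      from less.prems obtain G' where G: "G = dot # G'" "pair X G' \<noteq> (0::'k)"
        using Cons True t by (auto split: list.splits if_splits)
      have "weight X < weight F" using Cons True t by simp
      from less.hyps[OF this G(2)] show ?thesis using Cons True t G by simp
    next
      case False
      have "(\<Sum>i\<le>weight G. pair R (fst (cut i G)) * pair [t] (snd (cut i G))) \<noteq> (0::'k)"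
        using less.prems unfolding Cons pair_Cons_sum_cut[of t R G] .
      then obtain i where i: "i \<le> weight G"
        "pair R (fst (cut i G)) * pair [t] (snd (cut i G)) \<noteq> (0::'k)"
        by (meson atMost_iff sum.not_neutral_contains_not_neutral)
      moreover have "weight R < weight F" "weight [t] < weight F"
        using weight_less_Cons[OF False] Cons by simp_all
      ultimately have "weight R = i" "weight [t] = weight G - i"
        using less.hyps weight_cut[OF i(1)] by (metis mult_zero_left mult_zero_right)+
      then show ?thesis using i(1) weight_Cons[of t R] unfolding Cons by linarith
    qed
  qed
qed

lemma pair_Nil_right: "pair F [] = (if F = [] then 1 else (0::'k::field))"
  using weight_eq_if_pair_nonzero[of F "[]"] by (cases "F = []") auto

lemma pair_Cons_cut:
  assumes "weight (t # R) = weight G"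
  shows "pair (t # R) G = pair R (fst (cut (weight R) G)) * (pair [t] (snd (cut (weight R) G)) :: 'k::field)"
  unfolding pair_Cons_sum_cut[of t R G]
proof (rule sum_eq_single)
  have "weight R \<le> weight G" using assms weight_Cons[of t R] by linarith
  then show "weight R \<in> {..weight G}" by simp
next
  fix i assume "i \<in> {..weight G}" "i \<noteq> weight R"
  then have "pair R (fst (cut i G)) = (0::'k)"
    using weight_eq_if_pair_nonzero[of R "fst (cut i G)"] weight_cut[of i G] by auto
  then show "pair R (fst (cut i G)) * pair [t] (snd (cut i G)) = (0::'k)" by simp
qed simp

lemma pair_append_left:
  "weight (F1 @ F2) = weight G \<Longrightarrow>
   pair (F1 @ F2) G = pair F2 (fst (cut (weight F2) G)) * (pair F1 (snd (cut (weight F2) G)) :: 'k::field)"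
proof (induction F1 arbitrary: G)
  case Nil
  then have "cut (weight F2) G = (G, [])" using cut_weight[of G] by simp
  then show ?case by simp
next
  case (Cons t F1')
  define m where "m = weight (F1' @ F2)"
  define f where "f = weight F2"
  define G' where "G' = fst (cut m G)"
  define H where "H = snd (cut f G)"
  have wG: "weight G = weight [t] + m" using Cons.prems weight_Cons[of t "F1' @ F2"] unfolding m_def by simp
  have fm1: "f \<le> m" unfolding f_def m_def by simp
  have fm2: "m \<le> weight G" using wG by simp
  note fm = fm1 fm2
  have wG': "weight G' = m" unfolding G'_def using weight_cut[OF fm(2)] by simp
  have wH: "weight H = weight G - f" unfolding H_def using weight_cut[of f G] fm by simp
  have ca: "cut f G' = (fst (cut f G), fst (cut (m - f) H))"
     and cb: "snd (cut (m - f) H) = snd (cut m G)"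
    using cut_cut[OF fm] unfolding G'_def H_def by simp_all
  have "pair ((t # F1') @ F2) G = pair (t # (F1' @ F2)) G" by simp
  also have "\<dots> = pair (F1' @ F2) G' * (pair [t] (snd (cut m G)) :: 'k)"
    using pair_Cons_cut[of t "F1' @ F2" G] Cons.prems unfolding G'_def m_def by simp
  also have "pair (F1' @ F2) G' = pair F2 (fst (cut f G')) * (pair F1' (snd (cut f G')) :: 'k)"
    using Cons.IH[of G'] wG' unfolding m_def f_def by simp
  also have "\<dots> = pair F2 (fst (cut f G)) * (pair F1' (fst (cut (m - f) H)) :: 'k)"
    using ca by simp
  finally have L: "pair ((t # F1') @ F2) G = pair F2 (fst (cut f G)) * pair F1' (fst (cut (m - f) H))
      * (pair [t] (snd (cut (m - f) H)) :: 'k)" using cb by simp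
  have wt: "weight (t # F1') = weight H" using wH wG weight_Cons[of t F1'] unfolding m_def f_def by simp
  have mf: "m - f = weight F1'" unfolding m_def f_def by simp
  have "pair (t # F1') H = pair F1' (fst (cut (m - f) H)) * (pair [t] (snd (cut (m - f) H)) :: 'k)"
    using pair_Cons_cut[OF wt] mf by simp
  then show ?case using L unfolding H_def f_def by (simp add: mult.assoc)
qed

lemma sum_cuts_pair: "(\<Sum>p\<in>cuts F. pair A (fst p) * pair B (snd p)) = (pair (B @ A) F :: 'k::field)"
proof (cases "weight (B @ A) = weight F")
  case True
  have le: "weight A \<le> weight F" using True by simp
  have "(\<Sum>p\<in>cuts F. pair A (fst p) * pair B (snd p))
      = (\<Sum>i\<le>weight F. pair A (fst (cut i F)) * (pair B (snd (cut i F)) :: 'k))"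
    by (rule sum_cuts)
  also have "\<dots> = pair A (fst (cut (weight A) F)) * pair B (snd (cut (weight A) F))"
  proof (rule sum_eq_single)
    fix i assume i: "i \<in> {..weight F}" "i \<noteq> weight A"
    then have "weight (fst (cut i F)) = i" using weight_cut[of i F] by simp
    then have "pair A (fst (cut i F)) = (0::'k)" using weight_eq_if_pair_nonzero[of A "fst (cut i F)"] i(2) by auto
    then show "pair A (fst (cut i F)) * pair B (snd (cut i F)) = (0::'k)" by simp
  qed (use le in auto)
  also have "\<dots> = pair (B @ A) F" by (rule sym[OF pair_append_left[OF True]])
  finally show ?thesis .
next
  case False
  have "(\<Sum>p\<in>cuts F. pair A (fst p) * pair B (snd p)) = (0::'k)"
  proof (rule sum.neutral, rule ballI)
    fix p assume p: "p \<in> cuts F"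
    show "pair A (fst p) * pair B (snd p) = (0::'k)"
    proof (rule ccontr)
      assume "pair A (fst p) * pair B (snd p) \<noteq> (0::'k)"
      then have "pair A (fst p) \<noteq> (0::'k)" "pair B (snd p) \<noteq> (0::'k)" by auto
      then have "weight A = weight (fst p)" "weight B = weight (snd p)" using weight_eq_if_pair_nonzero by blast+
      then show False using weight_cuts[OF p] False by simp
    qed
  qed
  moreover have "pair (B @ A) F = (0::'k)" using weight_eq_if_pair_nonzero False by blast
  ultimately show ?thesis by simp
qed

lemma pair_Node_right:
  "pair F [Node Y] = (case F of [] \<Rightarrow> 0 | u # F' \<Rightarrow> if u = dot then pair F' Y else (0::'k::field))"
proof (cases "weight F = weight [Node Y]")
  case False
  then have "pair F [Node Y] = (0::'k)" using weight_eq_if_pair_nonzero by blast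
  moreover have "pair F' Y = (0::'k)" if "F = dot # F'" for F'
    using that False weight_eq_if_pair_nonzero[of F' Y] by auto
  ultimately show ?thesis by (cases F) auto
next
  case True
  then obtain X R where F: "F = Node X # R" by (cases F rule: weight.cases) auto
  define Y1 where "Y1 = fst (cut (weight R) Y)"
  define Y2 where "Y2 = snd (cut (weight R) Y)"
  have r: "weight R \<le> weight Y" using True F by simp
  then have "pair F [Node Y] = pair R Y1 * (pair [Node X] [Node Y2] :: 'k)"
    using pair_Cons_cut[of "Node X" R "[Node Y]"] True F unfolding Y1_def Y2_def by simp
  also have "\<dots> = (if X = [] then pair R Y else 0)"
  proof (cases "X = []")
    case True
    then have "cut (weight R) Y = (Y, [])" using F \<open>weight F = weight [Node Y]\<close> cut_weight[of Y] by simp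
    then show ?thesis using True unfolding Y1_def Y2_def by simp
  qed (simp add: pair_Nil_right)
  finally show ?thesis using F by simp
qed

lemma pair_tree_append_right:
  assumes IH: "\<And>G1 G2. weight X = weight G1 + weight G2 \<Longrightarrow>
      pair X (G1 @ G2) = pair (fst (cut (weight G2) X)) G2 * (pair (snd (cut (weight G2) X)) G1 :: 'k::field)"
    and w: "weight [Node X] = weight G1 + weight G2"
  shows "pair [Node X] (G1 @ G2)
    = pair (fst (cut (weight G2) [Node X])) G2 * (pair (snd (cut (weight G2) [Node X])) G1 :: 'k)"
proof (cases G1)
  case Nil
  then have "cut (weight G2) [Node X] = ([Node X], [])" using w cut_weight[of "[Node X]"] by simp
  then show ?thesis using Nil by simp
next
  case (Cons u G1')
  have "1 \<le> weight G1" unfolding Cons using weight_Cons[of u G1'] weight_tree_pos[of u] by linarith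
  then have "weight G2 < weight [Node X]" using w by linarith
  then have c: "cut (weight G2) [Node X] = (fst (cut (weight G2) X), [Node (snd (cut (weight G2) X))])"
    by simp
  show ?thesis
  proof (cases "u = dot")
    case True
    then have "weight X = weight G1' + weight G2" using w Cons by simp
    then show ?thesis using IH c Cons True by simp
  qed (use c Cons in simp)
qed

lemma pair_Cons_append_right_cut_tail:
  assumes IH_R: "\<And>G1 G2. weight R = weight G1 + weight G2 \<Longrightarrow>
      pair R (G1 @ G2) = pair (fst (cut (weight G2) R)) G2 * (pair (snd (cut (weight G2) R)) G1 :: 'k::field)"
    and w: "weight (t # R) = weight G1 + weight G2" and tail: "weight [t] \<le> weight G2"
  shows "pair (t # R) (G1 @ G2)
    = pair (fst (cut (weight G2) (t # R))) G2 * (pair (snd (cut (weight G2) (t # R))) G1 :: 'k)"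
proof -
  define j where "j = weight G2 - weight [t]"
  define L2 where "L2 = fst (cut j G2)"
  have wt: "weight (t # R) = weight [t] + weight R" by (rule weight_Cons)
  have wL2: "weight L2 = j" unfolding L2_def j_def using weight_cut[of _ G2] by simp
  have wLR: "weight (fst (cut j R)) = j" using weight_cut[of j R] tail w wt unfolding j_def by simp
  have "weight (t # fst (cut j R)) = weight G2"
    using weight_Cons[of t "fst (cut j R)"] wLR tail unfolding j_def by simp
  then have t_part: "pair (t # fst (cut j R)) G2 = pair (fst (cut j R)) L2 * (pair [t] (snd (cut j G2)) :: 'k)"
    using pair_Cons_cut wLR unfolding L2_def by metis
  have G1R: "weight G1 \<le> weight R" "weight R - weight G1 = j" using w wt tail unfolding j_def by simp_all
  have "pair (t # R) (G1 @ G2) = pair R (G1 @ L2) * (pair [t] (snd (cut j G2)) :: 'k)"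
    using pair_Cons_cut[of t R "G1 @ G2"] w cut_append_ge[OF G1R(1), of G2] G1R(2) unfolding L2_def by simp
  moreover have "pair R (G1 @ L2) = pair (fst (cut j R)) L2 * (pair (snd (cut j R)) G1 :: 'k)"
    using IH_R wL2 w wt tail unfolding j_def by simp
  moreover have "cut (weight G2) (t # R) = (t # fst (cut j R), snd (cut j R))"
    using cut_append_ge[of "[t]" "weight G2" R] tail unfolding j_def by simp
  ultimately show ?thesis using t_part by (simp add: ac_simps)
qed

lemma pair_Cons_append_right_cut_head:
  assumes IH_t: "\<And>G1 G2. weight [t] = weight G1 + weight G2 \<Longrightarrow>
      pair [t] (G1 @ G2) = pair (fst (cut (weight G2) [t])) G2 * (pair (snd (cut (weight G2) [t])) G1 :: 'k::field)"
    and w: "weight (t # R) = weight G1 + weight G2" and head: "weight G2 < weight [t]"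
  shows "pair (t # R) (G1 @ G2)
    = pair (fst (cut (weight G2) (t # R))) G2 * (pair (snd (cut (weight G2) (t # R))) G1 :: 'k)"
proof -
  let ?k = "weight G2" and ?r = "weight R"
  have wt: "weight (t # R) = weight [t] + ?r" by (rule weight_Cons)
  have "weight (snd (cut ?k [t]) @ R) = weight G1" using weight_cut[of ?k "[t]"] head w wt by simp
  then have R_part: "pair (snd (cut ?k [t]) @ R) G1
      = pair R (fst (cut ?r G1)) * (pair (snd (cut ?k [t])) (snd (cut ?r G1)) :: 'k)"
    using pair_append_left by metis
  have rG1: "?r \<le> weight G1" using head w wt by simp
  have "weight [t] = weight (snd (cut ?r G1)) + weight G2" using weight_cut[OF rG1] w wt rG1 by simp
  then have t_part: "pair [t] (snd (cut ?r G1) @ G2)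
      = pair (fst (cut ?k [t])) G2 * (pair (snd (cut ?k [t])) (snd (cut ?r G1)) :: 'k)"
    using IH_t by metis
  have "pair (t # R) (G1 @ G2) = pair R (fst (cut ?r G1)) * (pair [t] (snd (cut ?r G1) @ G2) :: 'k)"
    using pair_Cons_cut[of t R "G1 @ G2"] w cut_append_le[OF rG1, of G2] by simp
  moreover have "cut ?k (t # R) = (fst (cut ?k [t]), snd (cut ?k [t]) @ R)"
    using cut_append_le[of ?k "[t]" R] head by simp
  ultimately show ?thesis using t_part R_part by (simp add: ac_simps)
qed

lemma pair_append_right:
  "weight F = weight G1 + weight G2 \<Longrightarrow>
   pair F (G1 @ G2) = pair (fst (cut (weight G2) F)) G2 * (pair (snd (cut (weight G2) F)) G1 :: 'k::field)"
proof (induction "weight F" arbitrary: F G1 G2 rule: less_induct)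
  case less
  show ?case
  proof (cases F)
    case Nil
    then show ?thesis using less.prems by simp
  next
    case (Cons t R)
    show ?thesis
    proof (cases "R = []")
      case True
      obtain X where t: "t = Node X" by (cases t)
      have "weight X < weight F" using Cons True t by simp
      then show ?thesis
        using pair_tree_append_right[OF less.hyps] less.prems unfolding Cons True t by blast
    next
      case False
      then have "weight R < weight F" "weight [t] < weight F" using weight_less_Cons Cons by simp_all
      then show ?thesis
        using pair_Cons_append_right_cut_tail[OF less.hyps] pair_Cons_append_right_cut_head[OF less.hyps]
          less.prems not_less unfolding Cons by blast
    qed
  qed
qed

lemma pair_sym: "pair F G = (pair G F :: 'k::field)"
proof (induction "weight F" arbitrary: F G rule: less_induct)
  case less
  consider "F = []" | X where "F = [Node X]" | t R where "F = t # R" "R \<noteq> []"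
    by (metis list.exhaust ptree.exhaust)
  then show ?case
  proof cases
    case 1
    then show ?thesis by (simp add: pair_Nil_right)
  next
    case (2 X)
    then have "pair X G' = (pair G' X :: 'k)" for G' using less.hyps[of X] by simp
    then show ?thesis using 2 by (cases G) (simp_all add: pair_Nil_right pair_Node_right)
  next
    case (3 t R)
    then have lt: "weight R < weight F" "weight [t] < weight F" using weight_less_Cons by simp_all
    show ?thesis
    proof (cases "weight F = weight G")
      case True
      then have wG: "weight G = weight [t] + weight R" using 3 weight_Cons[of t R] by simp
      have "pair F G = pair R (fst (cut (weight R) G)) * (pair [t] (snd (cut (weight R) G)) :: 'k)"
        using pair_Cons_cut[of t R G] True 3 by simp
      also have "\<dots> = pair (fst (cut (weight R) G)) R * (pair (snd (cut (weight R) G)) [t] :: 'k)"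
        using less.hyps[OF lt(1)] less.hyps[OF lt(2)] by metis
      also have "\<dots> = pair G ([t] @ R)" using pair_append_right[OF wG] by (rule sym)
      finally show ?thesis using 3 by simp
    qed (metis weight_eq_if_pair_nonzero)
  qed
qed

section \<open>Triangularity and non-degeneracy of the pairing\<close>

text \<open>Hence pairing B+(X') R' with twist (B+(X) R) cuts off exactly
  twist R when X and X' have equal weight, and splits the first tree otherwise, which
  makes the matrix of the pairing against twisted forests triangular for forest_gt.\<close>
fun twist :: "forest \<Rightarrow> forest" where
  "twist [] = []"
| "twist (Node X # R) = Node (twist R) # twist X"

fun forest_gt :: "forest \<Rightarrow> forest \<Rightarrow> bool" where
  "forest_gt (Node X' # R') (Node X # R) =
     (weight X < weight X' \<or> (weight X' = weight X \<and> (forest_gt X' X \<or> (X' = X \<and> forest_gt R' R))))"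
| "forest_gt _ _ = False"

lemma weight_twist [simp]: "weight (twist F) = weight F"
  by (induction F rule: twist.induct) auto

lemma twist_twist [simp]: "twist (twist F) = F"
  by (induction F rule: twist.induct) auto

lemma twist_eq_iff [simp]: "twist F = twist G \<longleftrightarrow> F = G"
  by (metis twist_twist)

lemma forest_gt_irrefl: "\<not> forest_gt F F"
  by (induction F rule: weight.induct) auto

lemma forest_gt_trans: "forest_gt a b \<Longrightarrow> forest_gt b c \<Longrightarrow> forest_gt a c"
proof (induction a b arbitrary: c rule: forest_gt.induct)
  case (1 X' R' X R)
  then obtain X'' R'' where c: "c = Node X'' # R''" by (cases c rule: weight.cases) auto
  show ?case using 1 c by auto
qed auto

lemma forest_gt_total: "weight a = weight b \<Longrightarrow> a \<noteq> b \<Longrightarrow> forest_gt a b \<or> forest_gt b a"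
proof (induction a arbitrary: b rule: weight.induct)
  case 1
  then show ?case by simp
next
  case (2 X' R')
  then obtain X R where b: "b = Node X # R" by (cases b rule: weight.cases) auto
  show ?case
  proof (cases "weight X = weight X'")
    case True
    show ?thesis
    proof (cases "X = X'")
      case True
      then show ?thesis using 2 b by auto
    next
      case False
      then show ?thesis using 2(1)[of X] b \<open>weight X = weight X'\<close> by auto
    qed
  next
    case False
    then show ?thesis using b by auto
  qed
qed

lemma pair_Node_Cons_twist:
  assumes "weight X' + weight R' = weight X + weight R" "weight X \<le> weight X'"
  shows "pair (Node X' # R') (twist (Node X # R))
    = (if weight X' = weight X then pair R' (twist R) * pair X' (twist X) else (0::'k::field))"
proof -
  have "weight (Node X' # R') = weight (twist (Node X # R))" using assms(1) by simp
  then have split: "pair (Node X' # R') (twist (Node X # R))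
      = pair R' (fst (cut (weight R') (Node (twist R) # twist X)))
        * (pair [Node X'] (snd (cut (weight R') (Node (twist R) # twist X))) :: 'k)"
    using pair_Cons_cut by fastforce
  show ?thesis
  proof (cases "weight X' = weight X")
    case True
    then have "weight R' = weight (twist R)" using assms(1) by simp
    then have "cut (weight R') (Node (twist R) # twist X) = (twist R, dot # twist X)"
      using cut_weight[of "twist R"] by simp
    then show ?thesis using split True by simp
  next
    case False
    then have lt: "weight R' < weight (twist R)" using assms by simp
    then have "snd (cut (weight R') (twist R)) \<noteq> []" using weight_cut[of "weight R'" "twist R"] by auto
    then show ?thesis using split False lt by simp
  qed
qed

lemma pair_twist_triangular:
  "weight F' = weight F \<Longrightarrow> forest_gt F' F \<or> F' = F \<Longrightarrow>
   pair F' (twist F) = (if F' = F then 1 else (0::'k::field))"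
proof (induction "weight F" arbitrary: F F' rule: less_induct)
  case less
  show ?case
  proof (cases F rule: weight.cases)
    case 1
    then show ?thesis using less.prems by simp
  next
    case (2 X R)
    obtain X' R' where F': "F' = Node X' # R'"
      using less.prems 2 by (cases F' rule: weight.cases) auto
    have hyp: "weight X < weight X' \<or>
        (weight X' = weight X \<and> (forest_gt X' X \<or> (X' = X \<and> (forest_gt R' R \<or> R' = R))))"
      using less.prems(2) F' 2 by auto
    have w: "weight X' + weight R' = weight X + weight R" using less.prems(1) F' 2 by simp
    show ?thesis
    proof (cases "weight X' = weight X")
      case weq: True
      have IH_X: "pair X' (twist X) = (if X' = X then 1 else (0::'k))" if "forest_gt X' X \<or> X' = X"
        using less.hyps[of X X'] that weq 2 by simp
      have IH_R: "pair R' (twist R) = (if R' = R then 1 else (0::'k))" if "forest_gt R' R \<or> R' = R"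
        using less.hyps[of R R'] that weq w 2 by simp
      have eq: "pair F' (twist F) = pair R' (twist R) * (pair X' (twist X) :: 'k)"
        using pair_Node_Cons_twist[OF w] weq unfolding F' 2 by simp
      show ?thesis
      proof (cases "X' = X")
        case True
        then have "forest_gt R' R \<or> R' = R" using hyp forest_gt_irrefl by auto
        then show ?thesis using eq IH_X IH_R True F' 2 by simp
      next
        case False
        then show ?thesis using eq IH_X hyp weq F' 2 by simp
      qed
    next
      case False
      then show ?thesis using pair_Node_Cons_twist[OF w] hyp F' 2 by auto
    qed
  qed
qed

lemma pair_twist_diag [simp]: "pair F (twist F) = (1::'k::field)"
  using pair_twist_triangular[of F F] by simp

lemma pair_twist_eq:
  assumes "weight H = weight F \<Longrightarrow> \<not> forest_gt (twist H) F"
  shows "pair F H = (if H = twist F then 1 else (0::'k::field))"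
proof (cases "weight H = weight F")
  case True
  then have "forest_gt F (twist H) \<or> F = twist H"
    using assms forest_gt_total[of F "twist H"] by auto
  moreover have "F = twist H \<longleftrightarrow> H = twist F" by auto
  ultimately show ?thesis using pair_twist_triangular[of F "twist H"] True by auto
next
  case False
  then show ?thesis using weight_eq_if_pair_nonzero[of F H] by auto
qed

lemma pairing_eq_sum:
  assumes "finite S" "supp x \<subseteq> S"
  shows "pairing x G = (\<Sum>F\<in>S. x F * pair F G)"
  unfolding pairing_def
  by (rule sum.mono_neutral_left) (use assms in \<open>auto simp: supp_def\<close>)

lemma supp_diff_subset: "supp (\<lambda>a. f a - g a :: 'k::ab_group_add) \<subseteq> supp f \<union> supp g"
  by (auto simp: supp_def)

lemma inH_diff: "inH x \<Longrightarrow> inH y \<Longrightarrow> inH (\<lambda>a. x a - y a :: 'k::ab_group_add)"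
  unfolding inH_def by (rule finite_subset[OF supp_diff_subset]) simp

lemma pairing_diff:
  assumes "inH x" "inH y"
  shows "pairing (\<lambda>a. x a - y a) H = pairing x H - (pairing y H :: 'k::field)"
proof -
  let ?S = "supp x \<union> supp y"
  have "finite ?S" using assms by (simp add: inH_def)
  moreover have "supp (\<lambda>a. x a - y a) \<subseteq> ?S" "supp x \<subseteq> ?S" "supp y \<subseteq> ?S"
    unfolding supp_def by auto
  ultimately show ?thesis
    by (simp add: pairing_eq_sum[of ?S] left_diff_distrib sum_subtractf)
qed

lemma supp_basisv: "supp (basisv F :: _ \<Rightarrow> 'k::zero_neq_one) = {F}"
  by (auto simp: supp_def basisv_def)

lemma inH_basisv: "inH (basisv F :: _ \<Rightarrow> 'k::zero_neq_one)"
  by (simp add: inH_def supp_basisv)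

lemma pairing_basisv: "pairing (basisv F) H = (pair F H :: 'k::field)"
  unfolding pairing_def supp_basisv by (simp add: basisv_def)

lemma supp_lincomb_subset: "supp (lincomb c v T) \<subseteq> (\<Union>t\<in>T. supp (v t))"
proof
  fix a assume "a \<in> supp (lincomb c v T)"
  then have "(\<Sum>t\<in>T. c t * v t a) \<noteq> 0" by (simp add: supp_def lincomb_def)
  then obtain t where "t \<in> T" "c t * v t a \<noteq> 0" by (rule sum.not_neutral_contains_not_neutral)
  then show "a \<in> (\<Union>t\<in>T. supp (v t))" by (auto simp: supp_def)
qed

lemma inH_lincomb:
  assumes "finite T" "\<And>t. t \<in> T \<Longrightarrow> inH (v t)"
  shows "inH (lincomb c v T)"
  unfolding inH_def by (rule finite_subset[OF supp_lincomb_subset]) (use assms in \<open>auto simp: inH_def\<close>)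

lemma pairing_lincomb:
  assumes "finite T" "\<And>t. t \<in> T \<Longrightarrow> inH (v t)"
  shows "pairing (lincomb c v T) H = (\<Sum>t\<in>T. c t * pairing (v t) H :: 'k::field)"
proof -
  define S where "S = (\<Union>t\<in>T. supp (v t))"
  have fS: "finite S" unfolding S_def using assms by (auto simp: inH_def)
  have supp_v: "supp (v t) \<subseteq> S" if "t \<in> T" for t unfolding S_def using that by auto
  have "pairing (lincomb c v T) H = (\<Sum>a\<in>S. lincomb c v T a * pair a H)"
    using pairing_eq_sum[OF fS supp_lincomb_subset[of c v T, folded S_def]] .
  also have "\<dots> = (\<Sum>t\<in>T. c t * (\<Sum>a\<in>S. v t a * pair a H))"
    unfolding lincomb_def by (simp add: sum_distrib_right sum_distrib_left mult.assoc sum.swap[of _ S])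
  also have "\<dots> = (\<Sum>t\<in>T. c t * pairing (v t) H)"
    using pairing_eq_sum[OF fS supp_v] by simp
  finally show ?thesis .
qed

lemma finite_has_forest_gt_minimal:
  assumes "finite Q" "Q \<noteq> {}"
  shows "\<exists>F\<in>Q. \<forall>F'\<in>Q. \<not> forest_gt F F'"
  using assms
proof (induction Q rule: finite_ne_induct)
  case (singleton x)
  then show ?case using forest_gt_irrefl by auto
next
  case (insert x Q)
  then obtain m where m: "m \<in> Q" "\<forall>F'\<in>Q. \<not> forest_gt m F'" by blast
  then show ?case using forest_gt_trans forest_gt_irrefl by (cases "forest_gt m x") blast+
qed

lemma pairing_nondegenerate:
  assumes "inH (y :: forest \<Rightarrow> 'k::field)" "\<And>H. pairing y H = 0"
  shows "y = (\<lambda>_. 0)"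
proof (rule ccontr)
  assume "y \<noteq> (\<lambda>_. 0)"
  then have "supp y \<noteq> {}" by (auto simp: supp_def)
  moreover have fin: "finite (supp y)" using assms(1) by (simp add: inH_def)
  ultimately obtain F where F: "F \<in> supp y" "\<forall>G\<in>supp y. \<not> forest_gt F G"
    using finite_has_forest_gt_minimal by blast
  have "pairing y (twist F) = (\<Sum>G\<in>supp y. y G * pair G (twist F))" by (simp add: pairing_def)
  also have "\<dots> = y F * pair F (twist F)"
  proof (rule sum_eq_single[OF fin F(1)])
    fix G assume "G \<in> supp y" "G \<noteq> F"
    then show "y G * pair G (twist F) = 0" using F(2) pair_twist_eq[of "twist F" G] by auto
  qed
  also have "\<dots> = y F" by simp
  finally show False using assms(2) F(1) by (simp add: supp_def)
qed

lemma pairing_injective: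
  assumes "inH x" "inH y" "\<And>H. pairing x H = (pairing y H :: 'k::field)"
  shows "x = y"
proof -
  have "(\<lambda>a. x a - y a) = (\<lambda>_. 0)"
    using pairing_nondegenerate[OF inH_diff[OF assms(1,2)]] pairing_diff[OF assms(1,2)] assms(3) by simp
  then show ?thesis by (simp add: fun_eq_iff)
qed

text \<open>Triangular elimination: correcting F by the duals of the forests above it yields
  the dual of twist F.\<close>
lemma exists_dual_twist_step:
  fixes F :: forest
  defines "S \<equiv> {F'. weight F' = weight F \<and> forest_gt F' F}"
  assumes Y: "\<And>F'. F' \<in> S \<Longrightarrow>
      inH (Y F' :: forest \<Rightarrow> 'k::field) \<and> (\<forall>H. pairing (Y F') H = (if H = twist F' then 1 else 0))"
  shows "\<exists>y :: forest \<Rightarrow> 'k. inH y \<and> (\<forall>H. pairing y H = (if H = twist F then 1 else 0))"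
proof (intro exI conjI allI)
  have finS: "finite S" unfolding S_def by (rule finite_subset[OF _ finite_weight_eq[of "weight F"]]) auto
  have inH_comb: "inH (lincomb (\<lambda>F'. pair F (twist F')) Y S)"
    by (rule inH_lincomb[OF finS]) (use Y in blast)
  let ?y = "\<lambda>a. basisv F a - lincomb (\<lambda>F'. pair F (twist F')) Y S a"
  show "inH ?y" using inH_diff[OF inH_basisv inH_comb] .
  fix H
  have "pairing ?y H = pair F H - (\<Sum>F'\<in>S. pair F (twist F') * pairing (Y F') H)"
    unfolding pairing_diff[OF inH_basisv inH_comb] pairing_basisv
    using pairing_lincomb[OF finS, of Y] Y by simp
  also have "(\<Sum>F'\<in>S. pair F (twist F') * pairing (Y F') H) = (\<Sum>F'\<in>S. if F' = twist H then pair F H else 0)"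
    using Y by (intro sum.cong) auto
  also have "\<dots> = (if twist H \<in> S then pair F H else 0)" using finS by simp
  finally have y_H: "pairing ?y H = pair F H - (if twist H \<in> S then pair F H else 0)" .
  show "pairing ?y H = (if H = twist F then 1 else 0)"
  proof (cases "twist H \<in> S")
    case True
    then have "H \<noteq> twist F" using forest_gt_irrefl unfolding S_def by auto
    then show ?thesis using y_H True by simp
  next
    case False
    then have "pair F H = (if H = twist F then 1 else 0)"
      by (intro pair_twist_eq) (simp add: S_def)
    then show ?thesis using y_H False by simp
  qed
qed

lemma exists_dual_twist:
  "\<exists>y :: forest \<Rightarrow> 'k::field. inH y \<and> (\<forall>H. pairing y H = (if H = twist F then 1 else 0))"
proof (induction "card {F'. weight F' = weight F \<and> forest_gt F' F}" arbitrary: F rule: less_induct)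
  case less
  let ?S = "{F'. weight F' = weight F \<and> forest_gt F' F}"
  have finS: "finite ?S" by (rule finite_subset[OF _ finite_weight_eq[of "weight F"]]) auto
  have "\<exists>y :: forest \<Rightarrow> 'k. inH y \<and> (\<forall>H. pairing y H = (if H = twist F' then 1 else 0))"
    if F': "F' \<in> ?S" for F'
  proof -
    let ?S' = "{F''. weight F'' = weight F' \<and> forest_gt F'' F'}"
    have "?S' \<subseteq> ?S"
    proof
      fix x assume "x \<in> ?S'"
      then show "x \<in> ?S" using F' forest_gt_trans[of x F' F] by simp
    qed
    moreover have "F' \<notin> ?S'" using forest_gt_irrefl by simp
    ultimately have "?S' \<subset> ?S" using F' by (simp only: psubset_eq) blast
    from psubset_card_mono[OF finS this] show ?thesis by (rule less.hyps)
  qed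
  then obtain Y where "\<And>F'. F' \<in> ?S \<Longrightarrow>
      inH (Y F' :: forest \<Rightarrow> 'k) \<and> (\<forall>H. pairing (Y F') H = (if H = twist F' then 1 else 0))"
    by metis
  then show ?case by (rule exists_dual_twist_step)
qed

lemma fdual_characterization:
  "inH (fdual G :: forest \<Rightarrow> 'k::field) \<and> (\<forall>H. pairing (fdual G :: forest \<Rightarrow> 'k) H = (if G = H then 1 else 0))"
proof -
  let ?P = "\<lambda>x :: forest \<Rightarrow> 'k. inH x \<and> (\<forall>H. pairing x H = (if G = H then 1 else 0))"
  obtain y :: "forest \<Rightarrow> 'k" where "inH y" "\<forall>H. pairing y H = (if H = G then 1 else 0)"
    using exists_dual_twist[of "twist G"] by auto
  then have "?P y" by (simp add: eq_commute)
  moreover have "x1 = x2" if "?P x1" "?P x2" for x1 x2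
    by (rule pairing_injective) (use that in auto)
  ultimately have "\<exists>!x. ?P x" by blast
  then have "?P (THE x. ?P x)" by (rule theI')
  then show ?thesis unfolding fdual_def .
qed

lemma inH_fdual: "inH (fdual G :: forest \<Rightarrow> 'k::field)"
  using fdual_characterization by blast

lemma pairing_fdual: "pairing (fdual G :: forest \<Rightarrow> 'k::field) H = (if G = H then 1 else 0)"
  using fdual_characterization by blast
section \<open>Primitive elements\<close>

definition tensor_pairing :: "(forest \<times> forest \<Rightarrow> 'k::field) \<Rightarrow> forest \<Rightarrow> forest \<Rightarrow> 'k" where
  "tensor_pairing z A B = (\<Sum>p\<in>supp z. z p * (pair A (fst p) * pair B (snd p)))"

lemma tensor_pairing_eq_sum:
  assumes "finite C" "supp z \<subseteq> C"
  shows "tensor_pairing z A B = (\<Sum>p\<in>C. z p * (pair A (fst p) * pair B (snd p)))"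
  unfolding tensor_pairing_def
  by (rule sum.mono_neutral_left) (use assms in \<open>auto simp: supp_def\<close>)

lemma tensor_pairing_diff:
  assumes "finite (supp z1)" "finite (supp z2)"
  shows "tensor_pairing (\<lambda>p. z1 p - z2 p) A B = tensor_pairing z1 A B - tensor_pairing z2 A B"
proof -
  let ?C = "supp z1 \<union> supp z2"
  have "finite ?C" using assms by simp
  moreover have "supp (\<lambda>p. z1 p - z2 p) \<subseteq> ?C" "supp z1 \<subseteq> ?C" "supp z2 \<subseteq> ?C"
    unfolding supp_def by auto
  ultimately show ?thesis
    by (simp add: tensor_pairing_eq_sum[of ?C] left_diff_distrib sum_subtractf)
qed

lemma tensor_pairing_add:
  assumes "finite (supp z1)" "finite (supp z2)"
  shows "tensor_pairing (\<lambda>p. z1 p + z2 p) A B = tensor_pairing z1 A B + tensor_pairing z2 A B"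
proof -
  let ?C = "supp z1 \<union> supp z2"
  have "finite ?C" using assms by simp
  moreover have "supp (\<lambda>p. z1 p + z2 p) \<subseteq> ?C" "supp z1 \<subseteq> ?C" "supp z2 \<subseteq> ?C"
    unfolding supp_def by auto
  ultimately show ?thesis
    by (simp add: tensor_pairing_eq_sum[of ?C] distrib_right sum.distrib)
qed

lemma supp_tensor_subset: "supp (\<lambda>(a, b). x a * y b) \<subseteq> supp x \<times> supp (y :: _ \<Rightarrow> 'k::mult_zero)"
  by (auto simp: supp_def)

lemma tensor_pairing_tensor:
  assumes "inH x" "inH y"
  shows "tensor_pairing (\<lambda>(a, b). x a * y b) A B = pairing x A * (pairing y B :: 'k::field)"
proof -
  have fin: "finite (supp x \<times> supp y)" using assms by (simp add: inH_def)
  have "tensor_pairing (\<lambda>(a, b). x a * y b) A B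
      = (\<Sum>a\<in>supp x. \<Sum>b\<in>supp y. x a * y b * (pair A a * pair B b))"
    by (simp add: tensor_pairing_eq_sum[OF fin supp_tensor_subset] sum.cartesian_product split_beta)
  also have "\<dots> = pairing x A * pairing y B"
    by (simp add: pairing_def sum_product pair_sym[of _ A] pair_sym[of _ B] ac_simps)
  finally show ?thesis .
qed

lemma tensor_pairing_nondegenerate:
  assumes fin: "finite (supp z)" and zero: "\<And>A B. tensor_pairing z A B = (0::'k::field)"
  shows "z = (\<lambda>_. 0)"
proof
  fix p :: "forest \<times> forest"
  obtain a b where p: "p = (a, b)" by fastforce
  let ?P1 = "fst ` supp z" and ?P2 = "snd ` supp z"
  have fin12: "finite ?P1" "finite ?P2" using fin by simp_all
  have sub: "supp z \<subseteq> ?P1 \<times> ?P2" by force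
  have supp_row: "supp (\<lambda>b. z (a, b)) \<subseteq> ?P2" for a by (force simp: supp_def)
  define u where "u B = (\<lambda>a. \<Sum>b\<in>?P2. z (a, b) * pair B b)" for B
  have u_row: "u B a = pairing (\<lambda>b. z (a, b)) B" for a B
    unfolding u_def by (simp add: pairing_eq_sum[OF fin12(2) supp_row] pair_sym[of B])
  have "u B = (\<lambda>_. 0)" for B
  proof (rule pairing_nondegenerate)
    have supp_u: "supp (u B) \<subseteq> ?P1"
      unfolding u_def supp_def using sub by (force intro: sum.neutral simp: supp_def)
    then show "inH (u B)" unfolding inH_def using fin12(1) by (rule finite_subset)
    fix A
    have "pairing (u B) A = (\<Sum>a\<in>?P1. \<Sum>b\<in>?P2. z (a, b) * (pair A a * pair B b))"
      using pairing_eq_sum[OF fin12(1) supp_u]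
      by (simp add: u_def sum_distrib_left pair_sym[of _ A] ac_simps)
    also have "\<dots> = tensor_pairing z A B"
      unfolding tensor_pairing_eq_sum[OF finite_cartesian_product[OF fin12] sub]
      by (simp add: sum.cartesian_product split_beta)
    finally show "pairing (u B) A = 0" using zero by simp
  qed
  then have "(\<lambda>b. z (a, b)) = (\<lambda>_. 0)"
    using pairing_nondegenerate[of "\<lambda>b. z (a, b)"] fin12(2) supp_row u_row
    by (metis finite_subset inH_def)
  then show "z p = 0" unfolding p by (metis)
qed

lemma supp_Delta_subset: "supp (Delta (x :: forest \<Rightarrow> 'k::field)) \<subseteq> (\<Union>F\<in>supp x. cuts F)"
  unfolding supp_def Delta_def by (force intro: sum.neutral simp: delta_cuts)

lemma finite_supp_Delta: "inH x \<Longrightarrow> finite (supp (Delta (x :: forest \<Rightarrow> 'k::field)))"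
  by (rule finite_subset[OF supp_Delta_subset]) (simp add: inH_def)

lemma sum_delta_mult:
  assumes "finite C" "cuts F \<subseteq> C"
  shows "(\<Sum>p\<in>C. delta F p * g p) = (\<Sum>p\<in>cuts F. g p :: 'k::field)"
  by (rule sum.mono_neutral_cong_right) (use assms in \<open>auto simp: delta_cuts\<close>)

text \<open>The defining identity of the pairing, <BA, x> = <A \<otimes> B, \<Delta>(x)>, extended linearly in x.\<close>
lemma tensor_pairing_Delta:
  assumes "inH (x :: forest \<Rightarrow> 'k::field)"
  shows "tensor_pairing (Delta x) A B = pairing x (B @ A)"
proof -
  let ?C = "\<Union>F\<in>supp x. cuts F" and ?g = "\<lambda>p. pair A (fst p) * pair B (snd p)"
  have fin: "finite ?C" using assms by (simp add: inH_def)
  have "tensor_pairing (Delta x) A B = (\<Sum>p\<in>?C. \<Sum>F\<in>supp x. x F * (delta F p * ?g p))"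
    using tensor_pairing_eq_sum[OF fin supp_Delta_subset] by (simp add: Delta_def sum_distrib_right mult.assoc)
  also have "\<dots> = (\<Sum>F\<in>supp x. x F * (\<Sum>p\<in>?C. delta F p * ?g p))"
    by (subst sum.swap) (simp add: sum_distrib_left)
  also have "\<dots> = (\<Sum>F\<in>supp x. x F * pair F (B @ A))"
  proof (rule sum.cong[OF refl])
    fix F assume "F \<in> supp x"
    then have "(\<Sum>p\<in>?C. delta F p * ?g p) = (\<Sum>p\<in>cuts F. ?g p)" by (intro sum_delta_mult[OF fin]) auto
    also have "\<dots> = pair F (B @ A)" by (simp add: sum_cuts_pair pair_sym[of F])
    finally show "x F * (\<Sum>p\<in>?C. delta F p * ?g p) = x F * pair F (B @ A)" by (rule arg_cong)
  qed
  finally show ?thesis unfolding pairing_def .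
qed

lemma tensor_pairing_primitive:
  assumes "inH (x :: forest \<Rightarrow> 'k::field)"
  shows "tensor_pairing (\<lambda>(a, b). (if b = [] then x a else 0) + (if a = [] then x b else 0)) A B
    = pairing x A * pair [] B + pair [] A * pairing x B"
proof -
  let ?one = "basisv [] :: forest \<Rightarrow> 'k"
  have split: "(\<lambda>(a, b). (if b = [] then x a else 0) + (if a = [] then x b else 0))
      = (\<lambda>p. (\<lambda>(a, b). x a * ?one b) p + (\<lambda>(a, b). ?one a * x b) p)"
    by (auto simp: basisv_def)
  have fin: "finite (supp (\<lambda>(a, b). x a * ?one b))" "finite (supp (\<lambda>(a, b). ?one a * x b))"
    using assms inH_basisv[of "[]"] supp_tensor_subset[of x ?one] supp_tensor_subset[of ?one x]
    by (auto simp: inH_def intro: finite_subset)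
  show ?thesis
    unfolding split tensor_pairing_add[OF fin]
    using tensor_pairing_tensor[OF assms inH_basisv] tensor_pairing_tensor[OF inH_basisv assms]
    by (simp add: pairing_basisv)
qed

lemma Prim_iff_pairing:
  "x \<in> Prim \<longleftrightarrow> inH x \<and>
     (\<forall>A B. pairing x (B @ A) = pairing x A * pair [] B + pair [] A * (pairing x B :: 'k::field))"
proof (cases "inH x")
  case True
  define P where "P = (\<lambda>(a, b). (if b = [] then x a else 0) + (if a = [] then x b else 0))"
  have "supp P \<subseteq> supp x \<times> {[]} \<union> {[]} \<times> supp x" by (auto simp: P_def supp_def split: if_splits)
  then have fin: "finite (supp (Delta x))" "finite (supp P)"
    using True finite_supp_Delta[OF True] by (auto simp: inH_def intro: finite_subset)
  have "Delta x = P \<longleftrightarrow> (\<forall>A B. tensor_pairing (Delta x) A B = tensor_pairing P A B)"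
  proof
    assume "\<forall>A B. tensor_pairing (Delta x) A B = tensor_pairing P A B"
    moreover have "finite (supp (\<lambda>p. Delta x p - P p))"
      using fin by (intro finite_subset[OF supp_diff_subset]) simp
    ultimately have "(\<lambda>p. Delta x p - P p) = (\<lambda>_. 0)"
      using fin by (intro tensor_pairing_nondegenerate) (simp_all add: tensor_pairing_diff)
    then show "Delta x = P" by (simp add: fun_eq_iff)
  qed simp
  then show ?thesis
    using True by (simp add: Prim_def P_def tensor_pairing_Delta tensor_pairing_primitive)
qed (simp add: Prim_def)

lemma fdual_tree_in_Prim: "(fdual [t] :: forest \<Rightarrow> 'k::field) \<in> Prim"
proof -
  have "[t] = B @ A \<longleftrightarrow> (A = [t] \<and> B = []) \<or> (A = [] \<and> B = [t])" for A B :: forest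
    by (cases B) auto
  then show ?thesis by (auto simp: Prim_iff_pairing inH_fdual pairing_fdual)
qed

lemma pairing_Prim_non_tree:
  assumes "x \<in> Prim" "\<And>t. H \<noteq> [t]"
  shows "pairing x H = (0::'k::field)"
proof (cases H)
  case Nil
  have "pairing x ([] @ []) = pairing x [] * pair [] [] + pair [] [] * (pairing x [] :: 'k)"
    using assms(1) Prim_iff_pairing by blast
  then have "pairing x [] = pairing x [] + (pairing x [] :: 'k)" by simp
  then show ?thesis using Nil by (simp only: add_cancel_right_right)
next
  case (Cons t R)
  then have "R \<noteq> []" using assms(2) by blast
  have "pairing x ([t] @ R) = pairing x R * pair [] [t] + pair [] R * (pairing x [t] :: 'k)"
    using assms(1) Prim_iff_pairing by blast
  then show ?thesis using \<open>R \<noteq> []\<close> Cons by simp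
qed

lemma pairing_lincomb_fdual:
  assumes "finite T"
  shows "pairing (lincomb c (\<lambda>t. fdual [t]) T) H = (\<Sum>t\<in>T. if H = [t] then c t else (0::'k::field))"
proof -
  have "pairing (lincomb c (\<lambda>t. fdual [t]) T) H = (\<Sum>t\<in>T. c t * pairing (fdual [t]) H)"
    by (rule pairing_lincomb[OF assms inH_fdual])
  also have "\<dots> = (\<Sum>t\<in>T. if H = [t] then c t else 0)"
    by (intro sum.cong) (auto simp: pairing_fdual)
  finally show ?thesis .
qed

lemma finite_trees_pairing_nonzero:
  assumes "inH (x :: forest \<Rightarrow> 'k::field)"
  shows "finite {t. pairing x [t] \<noteq> 0}"
proof (rule finite_subset)
  show "{t. pairing x [t] \<noteq> 0} \<subseteq> (\<lambda>t. [t]) -` (\<Union>F\<in>supp x. {G. weight G = weight F})"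
  proof
    fix t assume "t \<in> {t. pairing x [t] \<noteq> 0}"
    then obtain F where "F \<in> supp x" "pair F [t] \<noteq> (0::'k)"
      unfolding pairing_def by (auto elim: sum.not_neutral_contains_not_neutral)
    then show "t \<in> (\<lambda>t. [t]) -` (\<Union>F\<in>supp x. {G. weight G = weight F})"
      using weight_eq_if_pair_nonzero by fastforce
  qed
  show "finite ((\<lambda>t. [t]) -` (\<Union>F\<in>supp x. {G. weight G = weight F}))"
    using assms finite_weight_eq by (intro finite_vimageI) (auto simp: inH_def inj_def)
qed

lemma Prim_eq_lincomb_fdual:
  assumes "(x :: forest \<Rightarrow> 'k::field) \<in> Prim"
  shows "x = lincomb (\<lambda>t. pairing x [t]) (\<lambda>t. fdual [t]) {t. pairing x [t] \<noteq> 0}"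
proof (rule pairing_injective)
  let ?T = "{t. pairing x [t] \<noteq> 0}"
  have x: "inH x" using assms by (simp add: Prim_def)
  then have fin: "finite ?T" by (rule finite_trees_pairing_nonzero)
  then show "inH (lincomb (\<lambda>t. pairing x [t]) (\<lambda>t. fdual [t]) ?T)" by (simp add: inH_lincomb inH_fdual)
  show "inH x" by (fact x)
  fix H
  show "pairing x H = pairing (lincomb (\<lambda>t. pairing x [t]) (\<lambda>t. fdual [t]) ?T) H"
  proof (cases "\<exists>s. H = [s]")
    case True
    then show ?thesis using fin by (auto simp: pairing_lincomb_fdual)
  next
    case False
    then have "(\<Sum>t\<in>?T. if H = [t] then pairing x [t] else 0) = 0" by (intro sum.neutral) auto
    then show ?thesis using False pairing_Prim_non_tree[OF assms] fin by (simp add: pairing_lincomb_fdual)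
  qed
qed

theorem proposition22:
  shows "is_basis_of (\<lambda>t. fdual [t] :: forest \<Rightarrow> 'k::field) UNIV Prim"
  unfolding is_basis_of_def
proof (intro conjI ballI allI impI)
  show "(fdual [t] :: forest \<Rightarrow> 'k) \<in> Prim" for t by (rule fdual_tree_in_Prim)
next
  fix T and c :: "ptree \<Rightarrow> 'k" and i
  assume "finite T" "T \<subseteq> UNIV" "lincomb c (\<lambda>t. fdual [t]) T = (\<lambda>_. 0)" "i \<in> T"
  then have "c i = pairing (\<lambda>_. 0 :: 'k) [i]"
    using pairing_lincomb_fdual[of T c "[i]"] by simp
  then show "c i = 0" by (simp add: pairing_def supp_def)
next
  fix x :: "forest \<Rightarrow> 'k" assume x: "x \<in> Prim"
  then have "finite {t. pairing x [t] \<noteq> 0}" by (simp add: Prim_def finite_trees_pairing_nonzero)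
  with Prim_eq_lincomb_fdual[OF x]
  show "\<exists>T c. finite T \<and> T \<subseteq> UNIV \<and> x = lincomb c (\<lambda>t. fdual [t]) T" by blast
qed

end
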